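(* Under the identification $\Lambda_k=\lambda_k$ ($k=1,\dots,N-1$), the stationarity (necessary optimality) conditions of $\tilde{\mathcal J}^{\mathrm{dir},2}_d$ with respect to $(q_0,\dots,q_N,U_d^{(1)},U_d^{(2)},\Lambda_1,\dots,\Lambda_{N-1},\mu,\nu)$ and those of $\tilde{\mathcal J}^{\mathcal E}_d$ with respect to $(y_0,\dots,y_N,U_d^{(1)},U_d^{(2)},\mu,\nu)$ are equivalent.
   Context: Setting: $\mathcal Q=\mathbb R^n$, $y_k=(q_k,\lambda_k)$, controls in $\mathbb R^m$; smooth $f(q,v)\in\mathbb R^n$, $\rho(q)\in\mathbb R^{n\times m}$, $\mathrm g(q)\in\mathbb R^{m\times m}$ symmetric positive definite, terminal cost $\phi(q,v)$; $q^0,\dot q^0\in\mathbb R^n$, $h=T/N$; parameters $\alpha,\gamma\in[0,1]$. Notation: $\bar q_k^\gamma=\gamma q_k+(1-\gamma)q_{k+1}$, $\bar\lambda_k^\gamma$ likewise, $\Delta q_k=(q_{k+1}-q_k)/h$, $\Delta\lambda_k$ likewise, $f_k^\gamma=f(\bar q_k^\gamma,\Delta q_k)$, $\rho_k^\gamma=\rho(\bar q_k^\gamma)$, $\mathrm g_k^\gamma=\mathrm g(\bar q_k^\gamma)$, and $F_k^{(1)}=f_k^\gamma+\rho_k^\gamma U_k^{(1)}$, $F_k^{(2)}=f_k^{1-\gamma}+\rho_k^{1-\gamma}U_k^{(2)}$. Approximate control-dependent discrete Lagrangian: $\tilde L^{\mathcal E}_d(y_k,y_{k+1},U_k^{(1)},U_k^{(2)},h)=h\big[\alpha\big(\Delta\lambda_k^\top\Delta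 q_k+(\bar\lambda_k^\gamma)^\top F_k^{(1)}-\frac12U_k^{(1)\top}\mathrm g_k^\gamma U_k^{(1)}\big)+(1-\alpha)\big(\Delta\lambda_k^\top\Delta q_k+(\bar\lambda_k^{1-\gamma})^\top F_k^{(2)}-\frac12U_k^{(2)\top}\mathrm g_k^{1-\gamma}U_k^{(2)}\big)\big]$. Boundary velocities: $v_0^-=\Delta q_0-h\alpha\gamma F_0^{(1)}-h(1-\alpha)(1-\gamma)F_0^{(2)}$ and $v_N^+=\Delta q_{N-1}+h\alpha(1-\gamma)F_{N-1}^{(1)}+h(1-\alpha)\gamma F_{N-1}^{(2)}$. Approximate control-dependent objective: $\tilde{\mathcal J}^{\mathcal E}_d=\phi(q_N,v_N^+)+\mu^\top(q_0-q^0)+\nu^\top(v_0^--\dot q^0)+\lambda_N^\top v_N^+-\lambda_0^\top v_0^--\sum_{k=0}^{N-1}\tilde L^{\mathcal E}_d(y_k,y_{k+1},U_k^{(1)},U_k^{(2)},h)$. Direct second-order objective, with multipliers $\Lambda_1,\dots,\Lambda_{N-1}\in\mathbb R^n$: $\tilde{\mathcal J}^{\mathrm{dir},2}_d=\phi(q_N,v_N^+)+\mu^\top(q_0-q^0)+\nu^\top(v_0^--\dot q^0)+\frac h2\sum_{k=0}^{N-1}\big(\alpha U_k^{(1)\top}\mathrm g_k^\gamma U_k^{(1)}+(1-\alpha)U_k^{(2)\top}\mathrm g_k^{1-\gamma}U_k^{(2)}\big)+h\sum_{k=1}^{N-1}\Lambda_k^\top\Big\{\frac{q_{k+1}-2q_k+q_{k-1}}{h^2}-\alpha\big[\gamma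 F_k^{(1)}+(1-\gamma)F_{k-1}^{(1)}\big]-(1-\alpha)\big[(1-\gamma)F_k^{(2)}+\gamma F_{k-1}^{(2)}\big]\Big\}$. *)

theory Defs
  imports "HOL-Analysis.Analysis"
begin

text \<open>A matrix rho(q) in R^(n x m) is real^'m^'n (rows indexed by 'n), so rho(q) *v U in R^n.
  Discrete trajectories are sequences indexed by nat; only the indices 0..N
  (states/costates) and 0..N-1 (controls) are used.\<close>

definition avg :: "real \<Rightarrow> (nat \<Rightarrow> 'a::real_vector) \<Rightarrow> nat \<Rightarrow> 'a" where
  "avg c x k = c *\<^sub>R x k + (1 - c) *\<^sub>R x (Suc k)"

definition dif :: "real \<Rightarrow> (nat \<Rightarrow> 'a::real_vector) \<Rightarrow> nat \<Rightarrow> 'a" where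
  "dif h x k = (1 / h) *\<^sub>R (x (Suc k) - x k)"

text \<open>F_k^(1) (c = gamma, control U^(1)) and F_k^(2) (c = 1 - gamma, control U^(2)).\<close>
definition Fk :: "(real^'n \<Rightarrow> real^'n \<Rightarrow> real^'n) \<Rightarrow> (real^'n \<Rightarrow> real^'m^'n)
    \<Rightarrow> real \<Rightarrow> real \<Rightarrow> (nat \<Rightarrow> real^'n) \<Rightarrow> (nat \<Rightarrow> real^'m) \<Rightarrow> nat \<Rightarrow> real^'n" where
  "Fk f \<rho> c h q U k = f (avg c q k) (dif h q k) + \<rho> (avg c q k) *v U k"

definition quadg :: "(real^'n \<Rightarrow> real^'m^'m) \<Rightarrow> real \<Rightarrow> (nat \<Rightarrow> real^'n) \<Rightarrow> (nat \<Rightarrow> real^'m) \<Rightarrow> nat \<Rightarrow> real" where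
  "quadg g c q U k = U k \<bullet> (g (avg c q k) *v U k)"

definition LdE where
  "LdE f \<rho> g \<alpha> \<gamma> h q lam U1 U2 k =
     h * (\<alpha> * (dif h lam k \<bullet> dif h q k + avg \<gamma> lam k \<bullet> Fk f \<rho> \<gamma> h q U1 k
                  - 1/2 * quadg g \<gamma> q U1 k)
        + (1 - \<alpha>) * (dif h lam k \<bullet> dif h q k + avg (1 - \<gamma>) lam k \<bullet> Fk f \<rho> (1 - \<gamma>) h q U2 k
                  - 1/2 * quadg g (1 - \<gamma>) q U2 k))"

definition v0minus where
  "v0minus f \<rho> \<alpha> \<gamma> h q U1 U2 =
     dif h q 0 - (h * \<alpha> * \<gamma>) *\<^sub>R Fk f \<rho> \<gamma> h q U1 0
               - (h * (1 - \<alpha>) * (1 - \<gamma>)) *\<^sub>R Fk f \<rho> (1 - \<gamma>) h q U2 0"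

definition vNplus where
  "vNplus f \<rho> \<alpha> \<gamma> h N q U1 U2 =
     dif h q (N - 1) + (h * \<alpha> * (1 - \<gamma>)) *\<^sub>R Fk f \<rho> \<gamma> h q U1 (N - 1)
               + (h * (1 - \<alpha>) * \<gamma>) *\<^sub>R Fk f \<rho> (1 - \<gamma>) h q U2 (N - 1)"

definition JE where
  "JE f \<rho> g \<phi> q0 qd0 T N \<alpha> \<gamma> q lam U1 U2 \<mu> \<nu> =
     (let h = T / real N;
          vN = vNplus f \<rho> \<alpha> \<gamma> h N q U1 U2;
          v0 = v0minus f \<rho> \<alpha> \<gamma> h q U1 U2
      in \<phi> (q N) vN + \<mu> \<bullet> (q 0 - q0) + \<nu> \<bullet> (v0 - qd0) + lam N \<bullet> vN - lam 0 \<bullet> v0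
         - (\<Sum>k<N. LdE f \<rho> g \<alpha> \<gamma> h q lam U1 U2 k))"

definition Jdir where
  "Jdir f \<rho> g \<phi> q0 qd0 T N \<alpha> \<gamma> q U1 U2 Lam \<mu> \<nu> =
     (let h = T / real N;
          vN = vNplus f \<rho> \<alpha> \<gamma> h N q U1 U2;
          v0 = v0minus f \<rho> \<alpha> \<gamma> h q U1 U2
      in \<phi> (q N) vN + \<mu> \<bullet> (q 0 - q0) + \<nu> \<bullet> (v0 - qd0)
         + h / 2 * (\<Sum>k<N. \<alpha> * quadg g \<gamma> q U1 k + (1 - \<alpha>) * quadg g (1 - \<gamma>) q U2 k)
         + h * (\<Sum>k\<in>{1..N-1}. Lam k \<bullet>
              ((1 / h\<^sup>2) *\<^sub>R (q (Suc k) - 2 *\<^sub>R q k + q (k - 1))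
               - \<alpha> *\<^sub>R (\<gamma> *\<^sub>R Fk f \<rho> \<gamma> h q U1 k + (1 - \<gamma>) *\<^sub>R Fk f \<rho> \<gamma> h q U1 (k - 1))
               - (1 - \<alpha>) *\<^sub>R ((1 - \<gamma>) *\<^sub>R Fk f \<rho> (1 - \<gamma>) h q U2 k
                               + \<gamma> *\<^sub>R Fk f \<rho> (1 - \<gamma>) h q U2 (k - 1)))))"

definition stat_block :: "((nat \<Rightarrow> 'a::real_normed_vector) \<Rightarrow> real) \<Rightarrow> (nat \<Rightarrow> 'a) \<Rightarrow> nat \<Rightarrow> bool" where
  "stat_block F x k \<longleftrightarrow> ((\<lambda>w. F (x(k := w))) has_derivative (\<lambda>_. 0)) (at (x k))"

definition stat_var :: "('a::real_normed_vector \<Rightarrow> real) \<Rightarrow> 'a \<Rightarrow> bool" where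
  "stat_var F x \<longleftrightarrow> (F has_derivative (\<lambda>_. 0)) (at x)"

definition dir_stationary where
  "dir_stationary f \<rho> g \<phi> q0 qd0 T N \<alpha> \<gamma> q U1 U2 Lam \<mu> \<nu> \<longleftrightarrow>
     (\<forall>k\<le>N. stat_block (\<lambda>q'. Jdir f \<rho> g \<phi> q0 qd0 T N \<alpha> \<gamma> q' U1 U2 Lam \<mu> \<nu>) q k) \<and>
     (\<forall>k<N. stat_block (\<lambda>U'. Jdir f \<rho> g \<phi> q0 qd0 T N \<alpha> \<gamma> q U' U2 Lam \<mu> \<nu>) U1 k) \<and>
     (\<forall>k<N. stat_block (\<lambda>U'. Jdir f \<rho> g \<phi> q0 qd0 T N \<alpha> \<gamma> q U1 U' Lam \<mu> \<nu>) U2 k) \<and>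
     (\<forall>k\<in>{1..N-1}. stat_block (\<lambda>L'. Jdir f \<rho> g \<phi> q0 qd0 T N \<alpha> \<gamma> q U1 U2 L' \<mu> \<nu>) Lam k) \<and>
     stat_var (\<lambda>m. Jdir f \<rho> g \<phi> q0 qd0 T N \<alpha> \<gamma> q U1 U2 Lam m \<nu>) \<mu> \<and>
     stat_var (\<lambda>n. Jdir f \<rho> g \<phi> q0 qd0 T N \<alpha> \<gamma> q U1 U2 Lam \<mu> n) \<nu>"

text \<open>Stationarity conditions of \<open>J~_d^E\<close> w.r.t.
  (y_0..y_N = (q_k, \<lambda>_k), U^(1)_0..U^(1)_(N-1), U^(2)_0..U^(2)_(N-1), \<mu>, \<nu>).\<close>
definition E_stationary where
  "E_stationary f \<rho> g \<phi> q0 qd0 T N \<alpha> \<gamma> q lam U1 U2 \<mu> \<nu> \<longleftrightarrow>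
     (\<forall>k\<le>N. stat_block (\<lambda>q'. JE f \<rho> g \<phi> q0 qd0 T N \<alpha> \<gamma> q' lam U1 U2 \<mu> \<nu>) q k) \<and>
     (\<forall>k\<le>N. stat_block (\<lambda>l'. JE f \<rho> g \<phi> q0 qd0 T N \<alpha> \<gamma> q l' U1 U2 \<mu> \<nu>) lam k) \<and>
     (\<forall>k<N. stat_block (\<lambda>U'. JE f \<rho> g \<phi> q0 qd0 T N \<alpha> \<gamma> q lam U' U2 \<mu> \<nu>) U1 k) \<and>
     (\<forall>k<N. stat_block (\<lambda>U'. JE f \<rho> g \<phi> q0 qd0 T N \<alpha> \<gamma> q lam U1 U' \<mu> \<nu>) U2 k) \<and>
     stat_var (\<lambda>m. JE f \<rho> g \<phi> q0 qd0 T N \<alpha> \<gamma> q lam U1 U2 m \<nu>) \<mu> \<and>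
     stat_var (\<lambda>n. JE f \<rho> g \<phi> q0 qd0 T N \<alpha> \<gamma> q lam U1 U2 \<mu> n) \<nu>"

end

theory Submission
  imports Defs
begin

text \<open>Both objectives are built from the same terms except for the coupling of the
  costate to the dynamics. Discrete summation by parts moves the differences and the
  \<open>\<gamma>\<close>-averages from the costate \<open>\<lambda>\<close> onto the states, and the boundary terms
  \<open>\<lambda>\<^sub>N \<bullet> v\<^sub>N\<^sup>+ - \<lambda>\<^sub>0 \<bullet> v\<^sub>0\<^sup>-\<close> exactly absorb the contributions of \<open>\<lambda>\<^sub>0\<close> and \<open>\<lambda>\<^sub>N\<close>.
  Hence \<open>J~\<^sub>d\<^sup>E\<close> equals \<open>J~\<^sub>d\<^sup>dir,2\<close> with \<open>\<Lambda>\<^sub>k = \<lambda>\<^sub>k\<close> as a function of all variables, and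
  it does not depend on \<open>\<lambda>\<^sub>0, \<lambda>\<^sub>N\<close> at all, so the two sets of stationarity conditions
  coincide.\<close>

lemma summation_by_parts_avg:
  fixes lam A :: "nat \<Rightarrow> 'a::real_inner"
  shows "lam (Suc M) \<bullet> ((1 - c) *\<^sub>R A M) + lam 0 \<bullet> (c *\<^sub>R A 0) - (\<Sum>k<Suc M. avg c lam k \<bullet> A k)
       = - (\<Sum>k\<in>{1..M}. lam k \<bullet> (c *\<^sub>R A k + (1 - c) *\<^sub>R A (k - 1)))"
proof (induction M)
  case 0
  then show ?case by (simp add: avg_def inner_add_left inner_add_right)
next
  case (Suc M)
  then show ?case
    by (simp add: sum.atLeast_Suc_atMost_Suc_shift avg_def inner_add_left inner_add_right
        algebra_simps)
qed

lemma summation_by_parts_diff: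
  fixes lam D :: "nat \<Rightarrow> 'a::real_inner"
  shows "lam (Suc M) \<bullet> D M - lam 0 \<bullet> D 0 - (\<Sum>k<Suc M. (lam (Suc k) - lam k) \<bullet> D k)
       = (\<Sum>k\<in>{1..M}. lam k \<bullet> (D k - D (k - 1)))"
  by (induction M) (simp_all add: inner_diff_left inner_diff_right algebra_simps)

text \<open>The identity behind the theorem, for arbitrary sequences: \<open>D\<close> plays
  \<open>\<Delta>q\<^sub>k\<close>, \<open>A\<close> and \<open>B\<close> play \<open>F\<^sub>k\<^sup>(\<^sup>1\<^sup>)\<close> and \<open>F\<^sub>k\<^sup>(\<^sup>2\<^sup>)\<close>.\<close>
lemma boundary_terms_minus_coupling_sum:
  fixes lam D A B :: "nat \<Rightarrow> 'a::real_inner"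
  assumes "h \<noteq> 0"
  shows "lam (Suc M) \<bullet> (D M + (h * \<alpha> * (1 - \<gamma>)) *\<^sub>R A M + (h * (1 - \<alpha>) * \<gamma>) *\<^sub>R B M)
       - lam 0 \<bullet> (D 0 - (h * \<alpha> * \<gamma>) *\<^sub>R A 0 - (h * (1 - \<alpha>) * (1 - \<gamma>)) *\<^sub>R B 0)
       - (\<Sum>k<Suc M. (lam (Suc k) - lam k) \<bullet> D k + h * \<alpha> * (avg \<gamma> lam k \<bullet> A k)
                      + h * (1 - \<alpha>) * (avg (1 - \<gamma>) lam k \<bullet> B k))
     = h * (\<Sum>k\<in>{1..M}. lam k \<bullet> ((1 / h) *\<^sub>R (D k - D (k - 1))
                 - \<alpha> *\<^sub>R (\<gamma> *\<^sub>R A k + (1 - \<gamma>) *\<^sub>R A (k - 1))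
                 - (1 - \<alpha>) *\<^sub>R ((1 - \<gamma>) *\<^sub>R B k + \<gamma> *\<^sub>R B (k - 1))))"
proof -
  have "lam (Suc M) \<bullet> (D M + (h * \<alpha> * (1 - \<gamma>)) *\<^sub>R A M + (h * (1 - \<alpha>) * \<gamma>) *\<^sub>R B M)
       - lam 0 \<bullet> (D 0 - (h * \<alpha> * \<gamma>) *\<^sub>R A 0 - (h * (1 - \<alpha>) * (1 - \<gamma>)) *\<^sub>R B 0)
       - (\<Sum>k<Suc M. (lam (Suc k) - lam k) \<bullet> D k + h * \<alpha> * (avg \<gamma> lam k \<bullet> A k)
                      + h * (1 - \<alpha>) * (avg (1 - \<gamma>) lam k \<bullet> B k))
     = (lam (Suc M) \<bullet> D M - lam 0 \<bullet> D 0 - (\<Sum>k<Suc M. (lam (Suc k) - lam k) \<bullet> D k))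
       + h * \<alpha> * (lam (Suc M) \<bullet> ((1 - \<gamma>) *\<^sub>R A M) + lam 0 \<bullet> (\<gamma> *\<^sub>R A 0)
                   - (\<Sum>k<Suc M. avg \<gamma> lam k \<bullet> A k))
       + h * (1 - \<alpha>) * (lam (Suc M) \<bullet> (\<gamma> *\<^sub>R B M) + lam 0 \<bullet> ((1 - \<gamma>) *\<^sub>R B 0)
                   - (\<Sum>k<Suc M. avg (1 - \<gamma>) lam k \<bullet> B k))"
    by (simp add: sum.distrib sum_subtractf sum_distrib_left inner_add_right inner_diff_right
        algebra_simps del: sum.lessThan_Suc)
  also have "\<dots> = (\<Sum>k\<in>{1..M}. lam k \<bullet> (D k - D (k - 1)))
       - h * \<alpha> * (\<Sum>k\<in>{1..M}. lam k \<bullet> (\<gamma> *\<^sub>R A k + (1 - \<gamma>) *\<^sub>R A (k - 1)))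
       - h * (1 - \<alpha>) * (\<Sum>k\<in>{1..M}. lam k \<bullet> ((1 - \<gamma>) *\<^sub>R B k + \<gamma> *\<^sub>R B (k - 1)))"
    using summation_by_parts_diff[of lam M D] summation_by_parts_avg[of lam M \<gamma> A]
      summation_by_parts_avg[of lam M "1 - \<gamma>" B]
    by simp
  also have "\<dots> = h * (\<Sum>k\<in>{1..M}. lam k \<bullet> ((1 / h) *\<^sub>R (D k - D (k - 1))
                 - \<alpha> *\<^sub>R (\<gamma> *\<^sub>R A k + (1 - \<gamma>) *\<^sub>R A (k - 1))
                 - (1 - \<alpha>) *\<^sub>R ((1 - \<gamma>) *\<^sub>R B k + \<gamma> *\<^sub>R B (k - 1))))"
    using assms
    by (simp add: sum_distrib_left sum_subtractf inner_diff_right algebra_simps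
        flip: sum.distrib)
  finally show ?thesis .
qed

lemma LdE_eq:
  assumes "h \<noteq> 0"
  shows "LdE f \<rho> g \<alpha> \<gamma> h q lam U1 U2 k =
     (lam (Suc k) - lam k) \<bullet> dif h q k + h * \<alpha> * (avg \<gamma> lam k \<bullet> Fk f \<rho> \<gamma> h q U1 k)
     + h * (1 - \<alpha>) * (avg (1 - \<gamma>) lam k \<bullet> Fk f \<rho> (1 - \<gamma>) h q U2 k)
     - h / 2 * (\<alpha> * quadg g \<gamma> q U1 k + (1 - \<alpha>) * quadg g (1 - \<gamma>) q U2 k)"
  using assms unfolding LdE_def dif_def[of h lam]
  by (simp add: inner_diff_left field_simps)

lemma second_difference_eq:
  assumes "h \<noteq> 0" and "k \<ge> 1"
  shows "(1 / h\<^sup>2) *\<^sub>R (q (Suc k) - 2 *\<^sub>R q k + q (k - 1))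
       = (1 / h) *\<^sub>R (dif h q k - dif h q (k - 1))"
proof -
  have "Suc (k - 1) = k" using assms(2) by simp
  then show ?thesis
    using assms(1) by (simp add: dif_def power2_eq_square algebra_simps scaleR_2)
qed

lemma JE_eq_Jdir:
  assumes "T / real N \<noteq> 0" and "N \<ge> 1"
    and "\<And>k. 1 \<le> k \<Longrightarrow> k \<le> N - 1 \<Longrightarrow> lam k = Lam k"
  shows "JE f \<rho> g \<phi> q0 qd0 T N \<alpha> \<gamma> q lam U1 U2 \<mu> \<nu>
       = Jdir f \<rho> g \<phi> q0 qd0 T N \<alpha> \<gamma> q U1 U2 Lam \<mu> \<nu>"
proof -
  define h where "h = T / real N"
  have h: "h \<noteq> 0" using assms(1) by (simp add: h_def)
  obtain M where N: "N = Suc M" using assms(2) by (cases N) auto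
  let ?A = "Fk f \<rho> \<gamma> h q U1" and ?B = "Fk f \<rho> (1 - \<gamma>) h q U2"
  let ?Q = "\<lambda>k. \<alpha> * quadg g \<gamma> q U1 k + (1 - \<alpha>) * quadg g (1 - \<gamma>) q U2 k"
  let ?vN = "vNplus f \<rho> \<alpha> \<gamma> h N q U1 U2" and ?v0 = "v0minus f \<rho> \<alpha> \<gamma> h q U1 U2"
  have constraint_sum:
    "(\<Sum>k\<in>{1..N-1}. Lam k \<bullet> ((1 / h\<^sup>2) *\<^sub>R (q (Suc k) - 2 *\<^sub>R q k + q (k - 1))
        - \<alpha> *\<^sub>R (\<gamma> *\<^sub>R ?A k + (1 - \<gamma>) *\<^sub>R ?A (k - 1))
        - (1 - \<alpha>) *\<^sub>R ((1 - \<gamma>) *\<^sub>R ?B k + \<gamma> *\<^sub>R ?B (k - 1))))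
     = (\<Sum>k\<in>{1..M}. lam k \<bullet> ((1 / h) *\<^sub>R (dif h q k - dif h q (k - 1))
        - \<alpha> *\<^sub>R (\<gamma> *\<^sub>R ?A k + (1 - \<gamma>) *\<^sub>R ?A (k - 1))
        - (1 - \<alpha>) *\<^sub>R ((1 - \<gamma>) *\<^sub>R ?B k + \<gamma> *\<^sub>R ?B (k - 1))))"
    (is "sum ?lhs _ = sum ?rhs _")
  proof (rule sum.cong)
    fix k assume "k \<in> {1..M}"
    then have "1 \<le> k" and "lam k = Lam k" using assms(3) by (auto simp: N)
    then show "?lhs k = ?rhs k"
      unfolding second_difference_eq[OF h \<open>1 \<le> k\<close>] by simp
  qed (simp add: N)
  have "lam N \<bullet> ?vN - lam 0 \<bullet> ?v0 - (\<Sum>k<N. LdE f \<rho> g \<alpha> \<gamma> h q lam U1 U2 k)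
      = h / 2 * (\<Sum>k<N. ?Q k)
        + h * (\<Sum>k\<in>{1..M}. lam k \<bullet> ((1 / h) *\<^sub>R (dif h q k - dif h q (k - 1))
        - \<alpha> *\<^sub>R (\<gamma> *\<^sub>R ?A k + (1 - \<gamma>) *\<^sub>R ?A (k - 1))
        - (1 - \<alpha>) *\<^sub>R ((1 - \<gamma>) *\<^sub>R ?B k + \<gamma> *\<^sub>R ?B (k - 1))))"
    using boundary_terms_minus_coupling_sum[OF h, of lam M "dif h q" \<alpha> \<gamma> ?A ?B]
    by (simp add: N vNplus_def v0minus_def LdE_eq[OF h] sum.distrib sum_subtractf
        sum_distrib_left algebra_simps)
  then show ?thesis
    unfolding JE_def Jdir_def Let_def h_def[symmetric] constraint_sum
    by (simp add: algebra_simps)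
qed

lemma stat_block_cong:
  assumes "\<And>w. F (x(k := w)) = G (y(k := w))" and "x k = y k"
  shows "stat_block F x k \<longleftrightarrow> stat_block G y k"
  using assms unfolding stat_block_def by simp

lemma stat_block_if_independent:
  assumes "\<And>w. F (x(k := w)) = c"
  shows "stat_block F x k"
  using assms unfolding stat_block_def by simp

theorem mainTheorem8:
  fixes f :: "real^'n \<Rightarrow> real^'n \<Rightarrow> real^'n"
    and \<rho> :: "real^'n \<Rightarrow> real^'m^'n"
    and g :: "real^'n \<Rightarrow> real^'m^'m"
    and \<phi> :: "real^'n \<Rightarrow> real^'n \<Rightarrow> real"
    and q0 qd0 :: "real^'n"
    and T \<alpha> \<gamma> :: real and N :: nat
    and q lam Lam :: "nat \<Rightarrow> real^'n"
    and U1 U2 :: "nat \<Rightarrow> real^'m"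
    and \<mu> \<nu> :: "real^'n"
  assumes "T > 0" and "N \<ge> 1"
    and "0 \<le> \<alpha>" "\<alpha> \<le> 1" "0 \<le> \<gamma>" "\<gamma> \<le> 1"
    and "\<And>p. case_prod f differentiable (at p)"
    and "\<And>x. \<rho> differentiable (at x)"
    and "\<And>x. g differentiable (at x)"
    and "\<And>p. case_prod \<phi> differentiable (at p)"
    and "\<And>x. transpose (g x) = g x"
    and "\<And>x u. u \<noteq> 0 \<Longrightarrow> u \<bullet> (g x *v u) > 0"
    and "\<And>k. 1 \<le> k \<Longrightarrow> k \<le> N - 1 \<Longrightarrow> lam k = Lam k"
  shows "dir_stationary f \<rho> g \<phi> q0 qd0 T N \<alpha> \<gamma> q U1 U2 Lam \<mu> \<nu>
     \<longleftrightarrow> E_stationary f \<rho> g \<phi> q0 qd0 T N \<alpha> \<gamma> q lam U1 U2 \<mu> \<nu>"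
proof -
  \<comment> \<open>The objectives agree identically.\<close>
  have h: "T / real N \<noteq> 0" using assms(1,2) by simp
  note agree = JE_eq_Jdir[OF h assms(2)]
  have same_objective: "JE f \<rho> g \<phi> q0 qd0 T N \<alpha> \<gamma> q' lam U1' U2' m n
       = Jdir f \<rho> g \<phi> q0 qd0 T N \<alpha> \<gamma> q' U1' U2' Lam m n" for q' U1' U2' m n
    using agree assms(13) by blast
  have costate_block: "stat_block (\<lambda>l. JE f \<rho> g \<phi> q0 qd0 T N \<alpha> \<gamma> q l U1 U2 \<mu> \<nu>) lam k
     \<longleftrightarrow> (k \<in> {1..N-1} \<longrightarrow> stat_block (\<lambda>L. Jdir f \<rho> g \<phi> q0 qd0 T N \<alpha> \<gamma> q U1 U2 L \<mu> \<nu>) Lam k)"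
    for k
  proof (cases "k \<in> {1..N-1}")
    case True
    then show ?thesis
      using assms(13) by (auto intro!: stat_block_cong agree)
  next
    case False
    then show ?thesis
      using assms(13) by (auto intro!: stat_block_if_independent agree)
  qed
  show ?thesis
    unfolding dir_stationary_def E_stationary_def same_objective costate_block by auto
qed

end
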